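(* For all $t,s,r\in\Lambda^\infty$: if $t\to^\infty_{\beta\bot}s$ and $s\to^*_\beta r$, then $t\to^\infty_{\beta\bot}r$.
   Context: Fix an infinite set $V$ of variables and a set $C$ of constants with $V\cap C=\emptyset$, containing a distinguished constant $\bot$. $\Lambda^\infty$ is the set of infinitary lambda-terms: all finite and infinite terms generated coinductively by $t ::= c\mid x\mid t\,t\mid\lambda x.t$, identified up to $\alpha$-equivalence; $s[t/x]$ is capture-avoiding substitution; $\equiv$ is identity; an atom is a variable or constant. For $R\subseteq\Lambda^\infty\times\Lambda^\infty$, the compatible closure $\to_R$ is the least relation with $(s,t)\in R\Rightarrow s\to_R t$ and $s\to_R s'\Rightarrow st\to_R s't,\ ts\to_R ts',\ \lambda x.s\to_R\lambda x.s'$. $\to_\beta$ is the compatible closure of $R_\beta=\{((\lambda x.s)t,s[t/x])\}$ and $\to^*_\beta$ its reflexive-transitive closure. A term is in head normal form (hnf) if it is $\lambda x_1\ldots x_m.\,a\,t_1\ldots t_n$ ($m,n\ge0$, $a$ an atom, $a\not\equiv\bot$); $t$ has a hnf if $t\to^*_\beta t'$ for some $t'$ in hnf. $R_\bot=\{(t,\bot)\mid t\text{ has no hnf}, t\not\equiv\bot\}$; $\to_{\beta\bot}$ is the compatible closure of $R_\beta\cup R_\bot$. The infinitary closure $\to^\infty_{\beta\bot}$ is the greatest relation such that whenever $s\to^\infty_{\beta\bot}t$ (with $\to^*$ the reflexive-transitive closure of $\to_{\beta\bot}$): $t\equiv a$ atom and $s\to^*a$; or $t\equiv t_1't_2'$,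 $s\to^*t_1t_2$, $t_i\to^\infty_{\beta\bot}t_i'$; or $t\equiv\lambda x.r'$, $s\to^*\lambda x.r$, $r\to^\infty_{\beta\bot}r'$. *)

theory Defs
  imports Main
begin

text \<open>Infinitary lambda-terms in de Bruijn representation (terms identified up to
alpha-equivalence).\<close>

codatatype 'c trm =
    Var nat
  | Con 'c
  | Bot
  | App "'c trm" "'c trm"
  | Lam "'c trm"

primcorec shift :: "nat \<Rightarrow> 'c trm \<Rightarrow> 'c trm" where
  "shift c t = (case t of
      Var i \<Rightarrow> Var (if c \<le> i then Suc i else i)
    | Con a \<Rightarrow> Con a
    | Bot \<Rightarrow> Bot
    | App a b \<Rightarrow> App (shift c a) (shift c b)
    | Lam b \<Rightarrow> Lam (shift (Suc c) b))"

text \<open>Capture-avoiding substitution of u for index k (u already lifted to depth k),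
decrementing the free indices above k.\<close>
primcorec subst :: "nat \<Rightarrow> 'c trm \<Rightarrow> 'c trm \<Rightarrow> 'c trm" where
  "subst k u t = (case t of
      Var i \<Rightarrow> (if i < k then Var i
                 else if i = k then (case u of
                     Var j \<Rightarrow> Var j
                   | Con a \<Rightarrow> Con a
                   | Bot \<Rightarrow> Bot
                   | App a b \<Rightarrow> App a b
                   | Lam b \<Rightarrow> Lam b)
                 else Var (i - 1))
    | Con a \<Rightarrow> Con a
    | Bot \<Rightarrow> Bot
    | App a b \<Rightarrow> App (subst k u a) (subst k u b)
    | Lam b \<Rightarrow> Lam (subst (Suc k) (shift 0 u) b))"

text \<open>s[t/x] for the outermost binder: (Lam s) t reduces to subst 0 t s.\<close>

inductive beta :: "'c trm \<Rightarrow> 'c trm \<Rightarrow> bool" where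
  root: "beta (App (Lam s) t) (subst 0 t s)"
| appL: "beta s s' \<Longrightarrow> beta (App s t) (App s' t)"
| appR: "beta s s' \<Longrightarrow> beta (App t s) (App t s')"
| lam:  "beta s s' \<Longrightarrow> beta (Lam s) (Lam s')"

abbreviation beta_star :: "'c trm \<Rightarrow> 'c trm \<Rightarrow> bool" where
  "beta_star \<equiv> beta\<^sup>*\<^sup>*"

text \<open>Head normal forms: \<lambda>x1..xm. a t1 .. tn with a an atom other than Bot.\<close>
inductive hd_app :: "'c trm \<Rightarrow> bool" where
  var: "hd_app (Var i)"
| con: "hd_app (Con c)"
| app: "hd_app h \<Longrightarrow> hd_app (App h t)"

inductive hnf :: "'c trm \<Rightarrow> bool" where
  base: "hd_app t \<Longrightarrow> hnf t"
| lam: "hnf t \<Longrightarrow> hnf (Lam t)"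

definition has_hnf :: "'c trm \<Rightarrow> bool" where
  "has_hnf t \<longleftrightarrow> (\<exists>t'. beta_star t t' \<and> hnf t')"

inductive beta_bot :: "'c trm \<Rightarrow> 'c trm \<Rightarrow> bool" where
  root_beta: "beta_bot (App (Lam s) t) (subst 0 t s)"
| root_bot: "\<not> has_hnf t \<Longrightarrow> t \<noteq> Bot \<Longrightarrow> beta_bot t Bot"
| appL: "beta_bot s s' \<Longrightarrow> beta_bot (App s t) (App s' t)"
| appR: "beta_bot s s' \<Longrightarrow> beta_bot (App t s) (App t s')"
| lam:  "beta_bot s s' \<Longrightarrow> beta_bot (Lam s) (Lam s')"

abbreviation beta_bot_star :: "'c trm \<Rightarrow> 'c trm \<Rightarrow> bool" where
  "beta_bot_star \<equiv> beta_bot\<^sup>*\<^sup>*"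

coinductive inf_beta_bot :: "'c trm \<Rightarrow> 'c trm \<Rightarrow> bool" where
  var: "beta_bot_star s (Var i) \<Longrightarrow> inf_beta_bot s (Var i)"
| con: "beta_bot_star s (Con c) \<Longrightarrow> inf_beta_bot s (Con c)"
| bot: "beta_bot_star s Bot \<Longrightarrow> inf_beta_bot s Bot"
| app: "beta_bot_star s (App t1 t2) \<Longrightarrow> inf_beta_bot t1 t1' \<Longrightarrow> inf_beta_bot t2 t2'
          \<Longrightarrow> inf_beta_bot s (App t1' t2')"
| lam: "beta_bot_star s (Lam r) \<Longrightarrow> inf_beta_bot r r' \<Longrightarrow> inf_beta_bot s (Lam r')"

end

theory Submission
  imports Defs
begin

text \<open>By induction on the finite \<beta>-reduction it suffices to append one \<beta>-step, and since the
infinitary relation descends through applications and abstractions, to contract one redex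
\<open>(\<lambda>x. b) a\<close> of the limit term. That redex arises from \<open>t \<rightarrow>* t1 t2\<close>, \<open>t1 \<rightarrow>* \<lambda>x. u\<close> with
\<open>u \<rightarrow>\<infinity> b\<close> and \<open>t2 \<rightarrow>\<infinity> a\<close>; firing it at finite depth gives \<open>t \<rightarrow>* u[t2/x]\<close>, and
\<open>u[t2/x] \<rightarrow>\<infinity> b[a/x]\<close> by closure of the infinitary relation under substitution.
That closure needs \<beta>\<bottom>-steps to be stable under substitution, in particular that a term without
hnf keeps none after a substitution. The latter holds because a \<beta>-reduction of \<open>u[v/x]\<close> to hnf
can be replayed on \<open>u\<close>: whenever it would need to look inside \<open>v\<close>, the term \<open>u\<close> is already
headed by \<open>x\<close>, hence in hnf.\<close>

lemma rtranclp_map: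
  assumes step: "\<And>x y. r x y \<Longrightarrow> s\<^sup>*\<^sup>* (f x) (f y)" and "r\<^sup>*\<^sup>* x y"
  shows "s\<^sup>*\<^sup>* (f x) (f y)"
  using assms(2) by induction (auto dest: step)

lemma shift_simps [simp]:
  "shift c (Var i) = Var (if c \<le> i then Suc i else i)"
  "shift c (Con a) = Con a"
  "shift c Bot = Bot"
  "shift c (App s t) = App (shift c s) (shift c t)"
  "shift c (Lam s) = Lam (shift (Suc c) s)"
  by (subst shift.code; simp)+

lemma subst_simps [simp]:
  "subst k u (Var i) = (if i < k then Var i else if i = k then u else Var (i - 1))"
  "subst k u (Con a) = Con a"
  "subst k u Bot = Bot"
  "subst k u (App s t) = App (subst k u s) (subst k u t)"
  "subst k u (Lam s) = Lam (subst (Suc k) (shift 0 u) s)"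
  by (subst subst.code; cases u; simp)+

lemma trm_coinduct_upto_eq [consumes 1, case_names step]:
  assumes "R a b"
    and step: "\<And>a b. R a b \<Longrightarrow> a = b
      \<or> (\<exists>a1 a2 b1 b2. a = App a1 a2 \<and> b = App b1 b2 \<and> R a1 b1 \<and> R a2 b2)
      \<or> (\<exists>a1 b1. a = Lam a1 \<and> b = Lam b1 \<and> R a1 b1)"
  shows "a = b"
  using assms(1)
proof (coinduction arbitrary: a b rule: trm.coinduct_strong)
  case (Eq_trm a b)
  from step[OF this] show ?case by (cases a) auto
qed

lemma shift_shift: "d \<le> c \<Longrightarrow> shift d (shift c t) = shift (Suc c) (shift d t)"
proof (coinduction arbitrary: c d t rule: trm_coinduct_upto_eq)
  case (step c d t)
  then show ?case by (cases t) auto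
qed

lemma shift_subst: "j \<le> c \<Longrightarrow> shift c (subst j u t) = subst j (shift c u) (shift (Suc c) t)"
proof (coinduction arbitrary: c j u t rule: trm_coinduct_upto_eq)
  case (step c j u t)
  then show ?case by (cases t) (auto simp: shift_shift)
qed

lemma shift_subst_above: "c \<le> k \<Longrightarrow> shift c (subst k u t) = subst (Suc k) (shift c u) (shift c t)"
proof (coinduction arbitrary: c k u t rule: trm_coinduct_upto_eq)
  case (step c k u t)
  then show ?case by (cases t) (auto simp: shift_shift)
qed

lemma subst_shift_cancel [simp]: "subst k u (shift k t) = t"
proof (coinduction arbitrary: k u t rule: trm_coinduct_upto_eq)
  case (step k u t)
  then show ?case by (cases t) auto
qed

lemma subst_subst:
  "j \<le> k \<Longrightarrow> subst k u (subst j v t) = subst j (subst k u v) (subst (Suc k) (shift j u) t)"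
proof (coinduction arbitrary: k j u v t rule: trm_coinduct_upto_eq)
  case (step k j u v t)
  show ?case
  proof (cases t)
    case (Lam s)
    have "shift (Suc j) (shift 0 u) = shift 0 (shift j u)"
      by (simp add: shift_shift)
    with Lam step show ?thesis
      by (simp add: shift_subst_above) (metis Suc_le_mono)
  qed (use step in auto)
qed

type_synonym renaming = "nat \<Rightarrow> nat option"

definition lift_ren :: "renaming \<Rightarrow> renaming" where
  "lift_ren g = case_nat (Some 0) (map_option Suc \<circ> g)"

lemma lift_ren_pow_below: "i < j \<Longrightarrow> (lift_ren ^^ j) g i = Some i"
proof (induction j arbitrary: i)
  case (Suc j)
  then show ?case by (cases i) (auto simp: lift_ren_def)
qed simp

lemma lift_ren_pow_above: "j \<le> i \<Longrightarrow> (lift_ren ^^ j) g i = map_option (\<lambda>x. x + j) (g (i - j))"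
proof (induction j arbitrary: i)
  case 0
  then show ?case by (simp add: option.map_ident)
next
  case (Suc j)
  then show ?case by (cases i) (auto simp: lift_ren_def option.map_comp o_def)
qed

text \<open>\<open>inst g u M\<close>: \<open>M\<close> is obtained from \<open>u\<close> by renaming each free index \<open>i\<close> with \<open>g i = Some j\<close>
to \<open>j\<close>, and by replacing arbitrarily any application spine headed by a hole, i.e. an index
with \<open>g i = None\<close>. Since \<open>u[v/k]\<close> and \<open>shift c u\<close> are instances of \<open>u\<close>, backward simulation of \<beta>
along \<open>inst\<close> transports head normal forms from them back to \<open>u\<close>.\<close>

inductive hole_headed :: "renaming \<Rightarrow> 'c trm \<Rightarrow> bool" where
  var: "g i = None \<Longrightarrow> hole_headed g (Var i)"
| app: "hole_headed g u \<Longrightarrow> hole_headed g (App u v)"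

coinductive inst :: "renaming \<Rightarrow> 'c trm \<Rightarrow> 'c trm \<Rightarrow> bool" where
  hole: "hole_headed g u \<Longrightarrow> inst g u M"
| var: "g i = Some j \<Longrightarrow> inst g (Var i) (Var j)"
| con: "inst g (Con a) (Con a)"
| bot: "inst g Bot Bot"
| app: "inst g u1 M1 \<Longrightarrow> inst g u2 M2 \<Longrightarrow> inst g (App u1 u2) (App M1 M2)"
| lam: "inst (lift_ren g) u M \<Longrightarrow> inst g (Lam u) (Lam M)"

lemma hole_headed_hd_app: "hole_headed g u \<Longrightarrow> hd_app u"
  by (induction rule: hole_headed.induct) (auto intro: hd_app.intros)

lemma hole_headed_shift:
  "hole_headed ((lift_ren ^^ c) g) u \<Longrightarrow> hole_headed ((lift_ren ^^ c) (lift_ren g)) (shift c u)"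
proof (induction "(lift_ren ^^ c) g" u rule: hole_headed.induct)
  case (var i)
  then have "c \<le> i" by (metis lift_ren_pow_below not_le option.distinct(1))
  with var show ?case
    by (auto simp: lift_ren_pow_above lift_ren_def Suc_diff_le intro!: hole_headed.var)
qed (auto intro: hole_headed.intros)

lemma hole_headed_subst:
  "hole_headed ((lift_ren ^^ j) (lift_ren g)) u \<Longrightarrow> hole_headed ((lift_ren ^^ j) g) (subst j v u)"
proof (induction "(lift_ren ^^ j) (lift_ren g)" u rule: hole_headed.induct)
  case (var i)
  then have "j < i"
    by (cases "i < j"; cases "i = j") (auto simp: lift_ren_pow_below lift_ren_pow_above lift_ren_def)
  then obtain i' where i': "i = Suc i'" "j \<le> i'" by (cases i) auto
  with var have "g (i' - j) = None" by (auto simp: lift_ren_pow_above lift_ren_def Suc_diff_le)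
  with i' show ?case by (auto simp: lift_ren_pow_above intro!: hole_headed.var)
qed (auto intro: hole_headed.intros)

lemma inst_shift:
  "inst ((lift_ren ^^ c) g) u M \<Longrightarrow> inst ((lift_ren ^^ c) (lift_ren g)) (shift c u) (shift c M)"
proof (coinduction arbitrary: c u M)
  case inst
  then show ?case
  proof (cases rule: inst.cases)
    case hole
    then show ?thesis by (auto intro: hole_headed_shift)
  next
    case (var i j)
    then show ?thesis
      by (cases "i < c")
        (auto simp: lift_ren_pow_below lift_ren_pow_above lift_ren_def Suc_diff_le)
  next
    case (lam u' M')
    then show ?thesis by (fastforce intro!: exI[of _ "Suc c"])
  qed auto
qed

lemma inst_subst:
  assumes "inst ((lift_ren ^^ j) (lift_ren g)) u M" and "inst ((lift_ren ^^ j) g) v N"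
  shows "inst ((lift_ren ^^ j) g) (subst j v u) (subst j N M)"
  using assms
proof (coinduction arbitrary: j u M v N)
  case inst
  from inst(1) show ?case
  proof (cases rule: inst.cases)
    case hole
    then show ?thesis by (auto intro: hole_headed_subst)
  next
    case (var i m)
    consider "i < j" | "i = j" | "j < i" by linarith
    then show ?thesis
    proof cases
      case 1
      with var show ?thesis by (auto simp: lift_ren_pow_below)
    next
      case 2
      with var have "subst j v u = v" "subst j N M = N"
        by (auto simp: lift_ren_pow_above lift_ren_def)
      with inst(2) show ?thesis by (auto elim: inst.cases)
    next
      case 3
      then obtain i' where "i = Suc i'" "j \<le> i'" by (cases i) auto
      with var show ?thesis by (auto simp: lift_ren_pow_above lift_ren_def Suc_diff_le)
    qed
  next
    case (app u1 M1 u2 M2)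
    with inst(2) show ?thesis by simp blast
  next
    case (lam u' M')
    moreover have "inst ((lift_ren ^^ Suc j) g) (shift 0 v) (shift 0 N)"
      using inst_shift[of 0 "(lift_ren ^^ j) g"] inst(2) by simp
    ultimately show ?thesis by (fastforce intro!: exI[of _ "Suc j"])
  qed auto
qed

lemma inst_subst_self: "inst ((lift_ren ^^ k) (case_nat None Some)) u (subst k v u)"
proof (coinduction arbitrary: k u v)
  case inst
  show ?case
  proof (cases u)
    case (Var i)
    then show ?thesis
      by (cases "i < k"; cases "i = k")
        (auto simp: lift_ren_pow_below lift_ren_pow_above intro: hole_headed.var split: nat.split)
  next
    case (Lam b)
    then show ?thesis by (fastforce intro!: exI[of _ "Suc k"])
  qed auto
qed

lemma inst_shift_self: "inst ((lift_ren ^^ c) (Some \<circ> Suc)) u (shift c u)"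
proof (coinduction arbitrary: c u)
  case inst
  show ?case
  proof (cases u)
    case (Var i)
    then show ?thesis by (cases "i < c") (auto simp: lift_ren_pow_below lift_ren_pow_above)
  next
    case (Lam b)
    then show ?thesis by (fastforce intro!: exI[of _ "Suc c"])
  qed auto
qed

lemma beta_star_App:
  assumes "beta_star s s'" and "beta_star t t'"
  shows "beta_star (App s t) (App s' t')"
proof -
  have "beta_star (App s t) (App s' t)"
    by (rule rtranclp_map[OF _ assms(1)]) (simp add: r_into_rtranclp beta.appL)
  also have "beta_star (App s' t) (App s' t')"
    by (rule rtranclp_map[OF _ assms(2)]) (simp add: r_into_rtranclp beta.appR)
  finally show ?thesis .
qed

lemma beta_star_Lam: "beta_star s s' \<Longrightarrow> beta_star (Lam s) (Lam s')"
  by (rule rtranclp_map[of beta beta Lam]) (simp_all add: r_into_rtranclp beta.lam)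

lemma inst_beta_back: "beta M M' \<Longrightarrow> inst g u M \<Longrightarrow> \<exists>u'. beta_star u u' \<and> inst g u' M'"
proof (induction arbitrary: g u rule: beta.induct)
  case (root s t)
  from root show ?case
  proof (cases rule: inst.cases)
    case (app u1 u2)
    from app(2) show ?thesis
    proof (cases rule: inst.cases)
      case hole
      with app show ?thesis by (auto intro: inst.hole hole_headed.app)
    next
      case (lam p)
      have "beta u (subst 0 u2 p)" using app lam by (auto intro: beta.root)
      moreover have "inst g (subst 0 u2 p) (subst 0 t s)"
        using inst_subst[of 0 g p s u2 t] lam app by simp
      ultimately show ?thesis by blast
    qed
  qed (auto intro: inst.hole)
next
  case (appL s s' t)
  from appL.prems show ?case
  proof (cases rule: inst.cases)
    case (app u1 u2)
    with appL.IH show ?thesis by (blast intro: beta_star_App inst.app)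
  qed (auto intro: inst.hole)
next
  case (appR s s' t)
  from appR.prems show ?case
  proof (cases rule: inst.cases)
    case (app u1 u2)
    with appR.IH show ?thesis by (blast intro: beta_star_App inst.app)
  qed (auto intro: inst.hole)
next
  case (lam s s')
  from lam.prems show ?case
  proof (cases rule: inst.cases)
    case (lam u0)
    with lam.IH show ?thesis by (blast intro: beta_star_Lam inst.lam)
  qed (auto intro: inst.hole)
qed

lemma inst_beta_star_back:
  "beta_star M M' \<Longrightarrow> inst g u M \<Longrightarrow> \<exists>u'. beta_star u u' \<and> inst g u' M'"
proof (induction arbitrary: u rule: rtranclp_induct)
  case (step M1 M2)
  then obtain u1 where "beta_star u u1" "inst g u1 M1" by blast
  with inst_beta_back[OF step(2)] show ?case by (meson rtranclp_trans)
qed blast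

lemma hd_app_inst_back: "hd_app M \<Longrightarrow> inst g u M \<Longrightarrow> hd_app u"
proof (induction arbitrary: u rule: hd_app.induct)
  case (app h t)
  from app.prems show ?case
    by (cases rule: inst.cases) (auto intro: hd_app.intros hole_headed_hd_app app.IH)
qed (auto elim: inst.cases intro: hd_app.intros hole_headed_hd_app)

lemma hnf_inst_back: "hnf M \<Longrightarrow> inst g u M \<Longrightarrow> hnf u"
proof (induction arbitrary: g u rule: hnf.induct)
  case (base t)
  then show ?case by (auto intro: hnf.base hd_app_inst_back)
next
  case (lam t)
  from lam.prems show ?case
    by (cases rule: inst.cases) (auto intro: hnf.intros hole_headed_hd_app lam.IH)
qed

lemma has_hnf_inst_back: "inst g u M \<Longrightarrow> has_hnf M \<Longrightarrow> has_hnf u"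
  unfolding has_hnf_def by (metis inst_beta_star_back hnf_inst_back)

lemma has_hnf_substD: "has_hnf (subst k v u) \<Longrightarrow> has_hnf u"
  using has_hnf_inst_back inst_subst_self by blast

lemma has_hnf_shiftD: "has_hnf (shift c u) \<Longrightarrow> has_hnf u"
  using has_hnf_inst_back inst_shift_self by blast

lemma beta_bot_star_App:
  assumes "beta_bot_star s s'" and "beta_bot_star t t'"
  shows "beta_bot_star (App s t) (App s' t')"
proof -
  have "beta_bot_star (App s t) (App s' t)"
    by (rule rtranclp_map[OF _ assms(1)]) (simp add: r_into_rtranclp beta_bot.appL)
  also have "beta_bot_star (App s' t) (App s' t')"
    by (rule rtranclp_map[OF _ assms(2)]) (simp add: r_into_rtranclp beta_bot.appR)
  finally show ?thesis .
qed

lemma beta_bot_star_Lam: "beta_bot_star s s' \<Longrightarrow> beta_bot_star (Lam s) (Lam s')"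
  by (rule rtranclp_map[of beta_bot beta_bot Lam]) (simp_all add: r_into_rtranclp beta_bot.lam)

lemma beta_bot_shift: "beta_bot M M' \<Longrightarrow> beta_bot (shift c M) (shift c M')"
proof (induction arbitrary: c rule: beta_bot.induct)
  case (root_beta s t)
  have "beta_bot (shift c (App (Lam s) t)) (subst 0 (shift c t) (shift (Suc c) s))"
    by (simp add: beta_bot.root_beta)
  then show ?case by (simp add: shift_subst)
next
  case (root_bot t)
  moreover have "shift c t \<noteq> Bot" using \<open>t \<noteq> Bot\<close> by (cases t) auto
  ultimately show ?case by (auto intro: beta_bot.root_bot dest: has_hnf_shiftD)
qed (auto intro: beta_bot.intros)

lemma beta_bot_subst: "beta_bot M M' \<Longrightarrow> beta_bot_star (subst k v M) (subst k v M')"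
proof (induction arbitrary: k v rule: beta_bot.induct)
  case (root_beta s t)
  have "beta_bot (subst k v (App (Lam s) t)) (subst 0 (subst k v t) (subst (Suc k) (shift 0 v) s))"
    by (simp add: beta_bot.root_beta)
  then show ?case by (simp add: subst_subst)
next
  case (root_bot t)
  show ?case
  proof (cases "subst k v t = Bot")
    case False
    with root_bot have "beta_bot (subst k v t) Bot"
      by (blast intro: beta_bot.root_bot dest: has_hnf_substD)
    then show ?thesis by simp
  qed (metis rtranclp.rtrancl_refl subst_simps(3))
qed (auto intro: beta_bot_star_App beta_bot_star_Lam)

lemma beta_bot_star_shift: "beta_bot_star M M' \<Longrightarrow> beta_bot_star (shift c M) (shift c M')"
  by (rule rtranclp_map[of beta_bot]) (simp_all add: r_into_rtranclp beta_bot_shift)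

lemma beta_bot_star_subst: "beta_bot_star M M' \<Longrightarrow> beta_bot_star (subst k v M) (subst k v M')"
  by (rule rtranclp_map[of beta_bot]) (simp_all add: beta_bot_subst)

lemma inf_beta_bot_prepend: "beta_bot_star s s' \<Longrightarrow> inf_beta_bot s' t \<Longrightarrow> inf_beta_bot s t"
  by (erule inf_beta_bot.cases) (auto intro: inf_beta_bot.intros rtranclp_trans)

lemma inf_beta_bot_shift: "inf_beta_bot M M' \<Longrightarrow> inf_beta_bot (shift c M) (shift c M')"
proof (coinduction arbitrary: c M M')
  case inf_beta_bot
  then show ?case
    by (cases rule: inf_beta_bot.cases) (fastforce dest: beta_bot_star_shift[of M _ c])+
qed

lemma inf_beta_bot_subst:
  "inf_beta_bot M M' \<Longrightarrow> inf_beta_bot N N' \<Longrightarrow> inf_beta_bot (subst k N M) (subst k N' M')"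
proof (coinduction arbitrary: k M M' N N')
  case inf_beta_bot
  from inf_beta_bot(1) show ?case
  proof (cases rule: inf_beta_bot.cases)
    case (var i)
    show ?thesis
    proof (cases "i = k")
      case True
      have "inf_beta_bot (subst k N M) N'"
        using inf_beta_bot_prepend[OF beta_bot_star_subst[OF var(2)]] True inf_beta_bot(2) by simp
      then show ?thesis using var True by (cases rule: inf_beta_bot.cases) auto
    next
      case False
      with var show ?thesis using beta_bot_star_subst[OF var(2), of k N] by auto
    qed
  next
    case (lam r r')
    with inf_beta_bot(2) show ?thesis
      using beta_bot_star_subst[of M "Lam r" k N] inf_beta_bot_shift[of N N' 0] by auto blast
  qed (use inf_beta_bot(2) in \<open>fastforce dest: beta_bot_star_subst[of M _ k N]\<close>)+
qed

lemma inf_beta_bot_beta: "beta s r \<Longrightarrow> inf_beta_bot t s \<Longrightarrow> inf_beta_bot t r"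
proof (induction arbitrary: t rule: beta.induct)
  case (root b a)
  then obtain t1 t2 where t: "beta_bot_star t (App t1 t2)" "inf_beta_bot t1 (Lam b)" "inf_beta_bot t2 a"
    by (cases rule: inf_beta_bot.cases) auto
  from t(2) obtain u where u: "beta_bot_star t1 (Lam u)" "inf_beta_bot u b"
    by (cases rule: inf_beta_bot.cases) auto
  have "beta_bot_star t (App (Lam u) t2)"
    using t(1) u(1) beta_bot_star_App by (blast intro: rtranclp_trans)
  then have "beta_bot_star t (subst 0 t2 u)"
    by (blast intro: beta_bot.root_beta rtranclp.rtrancl_into_rtrancl)
  moreover have "inf_beta_bot (subst 0 t2 u) (subst 0 a b)"
    using inf_beta_bot_subst t u by blast
  ultimately show ?case by (rule inf_beta_bot_prepend)
next
  case (appL s s' t')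
  from appL.prems show ?case
    by (cases rule: inf_beta_bot.cases) (auto intro: inf_beta_bot.app appL.IH)
next
  case (appR s s' t')
  from appR.prems show ?case
    by (cases rule: inf_beta_bot.cases) (auto intro: inf_beta_bot.app appR.IH)
next
  case (lam s s')
  from lam.prems show ?case
    by (cases rule: inf_beta_bot.cases) (auto intro: inf_beta_bot.lam lam.IH)
qed

theorem corollary5p33:
  fixes t s r :: "'c trm"
  assumes "inf_beta_bot t s" and "beta_star s r"
  shows "inf_beta_bot t r"
  using assms(2,1) by induction (auto intro: inf_beta_bot_beta)

end
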